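(* Let $P=MN\supset T$ be a maximal parabolic subgroup of $G=\mathrm{GL}_d$, $U\subset N(F)$ and $H\subset M(F)$ open and closed subgroups with $H$ normalizing $U$, and let $\mathfrak{u}$ be the Lie algebra of $U$. Let $X$ be an $H$-orbit in $\mathscr{X}^M$. Then $\dim_k\big(\mathfrak{u}/(\mathfrak{u}\cap\mathrm{Ad}(g)\mathfrak{g}(\mathcal{O}))\big)$ is independent of $g$ for $gK\in X$.
   Context: $k$ algebraically closed, $F=k((\epsilon))$, $\mathcal{O}=k[[\epsilon]]$, $G=\mathrm{GL}_d$, $T$ diagonal torus, $K=G(\mathcal{O})$, $\mathscr{X}=G(F)/K$. $P=MN$ is a Levi decomposition with $M\supset T$; $\mathscr{X}^M=M(F)/M(\mathcal{O})$ is embedded in $\mathscr{X}$ via $mM(\mathcal{O})\mapsto mK$. *)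

theory Defs
  imports "HOL-Analysis.Analysis" "HOL-Computational_Algebra.Formal_Laurent_Series"
          "HOL-Computational_Algebra.Polynomial" "HOL-Library.Extended_Nat"
begin

text \<open>k is an algebraically closed field; F = k((eps)) is the type 'k fls;
  d x d matrices over F are indexed by a finite type 'n, d = CARD('n).\<close>

definition alg_closed_field :: "'k::field itself \<Rightarrow> bool" where
  "alg_closed_field _ \<longleftrightarrow> (\<forall>p :: 'k poly. degree p > 0 \<longrightarrow> (\<exists>x. poly p x = 0))"

text \<open>valuation at least n (the zero series has infinite valuation)\<close>
definition val_ge :: "'k::field fls \<Rightarrow> int \<Rightarrow> bool" where
  "val_ge f n \<longleftrightarrow> f = 0 \<or> fls_subdegree f \<ge> n"

definition intO :: "'k::field fls \<Rightarrow> bool" where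
  "intO f \<longleftrightarrow> val_ge f 0"

type_synonym ('k, 'n) mat = "'k fls ^ 'n ^ 'n"

definition GLF :: "('k::field, 'n::finite) mat set" where
  "GLF = {g. invertible g}"

definition gO :: "('k::field, 'n::finite) mat set" where
  "gO = {X. \<forall>i j. intO (X $ i $ j)}"

definition Kgrp :: "('k::field, 'n::finite) mat set" where
  "Kgrp = {g. invertible g \<and> g \<in> gO \<and> matrix_inv g \<in> gO}"

text \<open>The maximal parabolic P containing T stabilising the coordinate subspace
  spanned by e_i, i in S (S nonempty proper), its Levi factor M containing T
  (block diagonal w.r.t. S and its complement), and its unipotent radical N
  with Lie algebra n.\<close>
definition Parab :: "'n::finite set \<Rightarrow> ('k::field, 'n) mat set" where
  "Parab S = {g \<in> GLF. \<forall>i j. i \<notin> S \<and> j \<in> S \<longrightarrow> g $ i $ j = 0}"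

definition Levi :: "'n::finite set \<Rightarrow> ('k::field, 'n) mat set" where
  "Levi S = {g \<in> GLF. \<forall>i j. (i \<in> S \<longleftrightarrow> j \<notin> S) \<longrightarrow> g $ i $ j = 0}"

definition nLie :: "'n::finite set \<Rightarrow> ('k::field, 'n) mat set" where
  "nLie S = {X. \<forall>i j. \<not> (i \<in> S \<and> j \<notin> S) \<longrightarrow> X $ i $ j = 0}"

definition Nrad :: "'n::finite set \<Rightarrow> ('k::field, 'n) mat set" where
  "Nrad S = {mat 1 + X | X. X \<in> nLie S}"

definition subgroup_of :: "('k::field, 'n::finite) mat set \<Rightarrow> ('k, 'n) mat set \<Rightarrow> bool" where
  "subgroup_of A B \<longleftrightarrow> A \<subseteq> B \<and> mat 1 \<in> A \<and>
     (\<forall>x\<in>A. \<forall>y\<in>A. x ** y \<in> A) \<and> (\<forall>x\<in>A. matrix_inv x \<in> A)"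

text \<open>Openness (in the eps-adic topology) of a subgroup of N(F), resp. M(F):
  it contains a basic neighbourhood of the identity.\<close>
definition open_in_N :: "'n::finite set \<Rightarrow> ('k::field, 'n) mat set \<Rightarrow> bool" where
  "open_in_N S U \<longleftrightarrow> (\<exists>n. \<forall>X\<in>nLie S. (\<forall>i j. val_ge (X $ i $ j) n) \<longrightarrow> mat 1 + X \<in> U)"

definition open_in_M :: "'n::finite set \<Rightarrow> ('k::field, 'n) mat set \<Rightarrow> bool" where
  "open_in_M S H \<longleftrightarrow> (\<exists>n. \<forall>m\<in>Levi S. (\<forall>i j. val_ge ((m - mat 1) $ i $ j) n) \<longrightarrow> m \<in> H)"

definition normalizes :: "('k::field, 'n::finite) mat set \<Rightarrow> ('k, 'n) mat set \<Rightarrow> bool" where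
  "normalizes H U \<longleftrightarrow> (\<forall>h\<in>H. {h ** u ** matrix_inv h | u. u \<in> U} = U)"

text \<open>coset gK, and the H-orbit of mK in X^M (seen inside X = G(F)/K)\<close>
definition coset :: "('k::field, 'n::finite) mat \<Rightarrow> ('k, 'n) mat set" where
  "coset g = {g ** k | k. k \<in> Kgrp}"

definition Horbit :: "('k::field, 'n::finite) mat set \<Rightarrow> ('k, 'n) mat \<Rightarrow> ('k, 'n) mat set set" where
  "Horbit H m = {coset (h ** m) | h. h \<in> H}"

definition ksmult :: "'k::field \<Rightarrow> ('k, 'n::finite) mat \<Rightarrow> ('k, 'n) mat" where
  "ksmult c X = (\<chi> i j. fls_const c * X $ i $ j)"

definition kspan :: "('k::field, 'n::finite) mat set \<Rightarrow> ('k, 'n) mat set" where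
  "kspan A = {(\<Sum>i<n. ksmult (c i) (xs i)) | (n::nat) c xs. \<forall>i<n. xs i \<in> A}"

text \<open>Lie algebra of the (abelian, unipotent) group U inside n(F):
  the k-span of {u - 1 : u in U}.\<close>
definition lie_algebra :: "('k::field, 'n::finite) mat set \<Rightarrow> ('k, 'n) mat set" where
  "lie_algebra U = kspan {u - mat 1 | u. u \<in> U}"

definition Ad :: "('k::field, 'n::finite) mat \<Rightarrow> ('k, 'n) mat \<Rightarrow> ('k, 'n) mat" where
  "Ad g X = g ** X ** matrix_inv g"

text \<open>dim_k (A / (A \<inter> L)) for a k-subspace A: the supremum of the sizes of
  families in A that are k-linearly independent modulo L (possibly infinite).\<close>
definition quot_dim :: "('k::field, 'n::finite) mat set \<Rightarrow> ('k, 'n) mat set \<Rightarrow> enat" where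
  "quot_dim A L = Sup {enat n | n. \<exists>xs. (\<forall>i<n. xs i \<in> A) \<and>
      (\<forall>c. (\<Sum>i<n. ksmult (c i) (xs i)) \<in> L \<longrightarrow> (\<forall>i<n. c i = 0))}"

end

theory Submission
  imports Defs
begin

text \<open>For \<open>k \<in> K\<close> we have \<open>Ad k (gl_d(O)) = gl_d(O)\<close>, so the lattice \<open>Ad g (gl_d(O))\<close>
  depends only on the coset \<open>gK\<close>. If \<open>gK = h m K\<close> with \<open>h \<in> H\<close>, this lattice is the image of
  \<open>Ad m (gl_d(O))\<close> under \<open>Ad h\<close>, a \<open>k\<close>-linear automorphism of \<open>gl_d(F)\<close> that maps the Lie
  algebra of \<open>U\<close> onto itself because \<open>h\<close> normalizes \<open>U\<close>. Such an automorphism preserves the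
  relative dimension, so every \<open>g\<close> gives the value obtained for \<open>g = m\<close>.\<close>

lemma matrix_inv_left_right:
  fixes A :: "'a::semiring_1^'n^'n"
  assumes "invertible A"
  shows matrix_inv_left: "matrix_inv A ** A = mat 1"
    and matrix_inv_right: "A ** matrix_inv A = mat 1"
proof -
  have "\<exists>A'. A ** A' = mat 1 \<and> A' ** A = mat 1"
    using assms unfolding invertible_def by blast
  then have "A ** matrix_inv A = mat 1 \<and> matrix_inv A ** A = mat 1"
    unfolding matrix_inv_def by (rule someI_ex)
  then show "matrix_inv A ** A = mat 1" "A ** matrix_inv A = mat 1" by auto
qed

lemma matrix_inv_unique:
  fixes A B :: "'a::semiring_1^'n^'n"
  assumes "invertible A" "A ** B = mat 1"
  shows "matrix_inv A = B"
proof -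
  have "matrix_inv A = matrix_inv A ** (A ** B)" using assms(2) by simp
  also have "\<dots> = B" by (simp add: matrix_mul_assoc matrix_inv_left[OF assms(1)])
  finally show ?thesis .
qed

lemma invertible_matrix_inv:
  fixes A :: "'a::semiring_1^'n^'n"
  assumes "invertible A"
  shows "invertible (matrix_inv A)"
  using matrix_inv_left_right[OF assms] unfolding invertible_def by blast

lemma matrix_inv_matrix_inv:
  fixes A :: "'a::semiring_1^'n^'n"
  assumes "invertible A"
  shows "matrix_inv (matrix_inv A) = A"
  using invertible_matrix_inv[OF assms] matrix_inv_left[OF assms] by (rule matrix_inv_unique)

lemma matrix_inv_mult:
  fixes A B :: "'a::semiring_1^'n^'n"
  assumes "invertible A" "invertible B"
  shows "matrix_inv (A ** B) = matrix_inv B ** matrix_inv A"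
proof (rule matrix_inv_unique)
  show "invertible (A ** B)" using assms by (rule invertible_mult)
  have "A ** B ** (matrix_inv B ** matrix_inv A) = A ** (B ** matrix_inv B) ** matrix_inv A"
    by (simp add: matrix_mul_assoc)
  then show "A ** B ** (matrix_inv B ** matrix_inv A) = mat 1"
    by (simp add: matrix_inv_right assms)
qed

lemma matrix_mult_diff_left:
  "(A::'a::comm_ring_1^'n^'m) ** (B - C) = A ** B - A ** C"
  by (simp add: matrix_matrix_mult_def vec_eq_iff right_diff_distrib sum_subtractf)

lemma matrix_mult_diff_right:
  "((A::'a::comm_ring_1^'n^'m) - B) ** C = A ** C - B ** C"
  by (simp add: matrix_matrix_mult_def vec_eq_iff left_diff_distrib sum_subtractf)

lemma matrix_mult_add_right:
  "((A::'a::comm_ring_1^'n^'m) + B) ** C = A ** C + B ** C"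
  by (simp add: matrix_matrix_mult_def vec_eq_iff distrib_right sum.distrib)

lemma ksmult_eq_mat_mult: "ksmult c X = mat (fls_const c) ** X"
  by (simp add: ksmult_def matrix_matrix_mult_def mat_def vec_eq_iff
      if_distrib if_distribR sum.delta cong: if_cong)

lemma mat_mult_commute: "mat (c::'a::comm_ring_1) ** X = X ** mat c"
  by (simp add: matrix_matrix_mult_def mat_def vec_eq_iff if_distrib if_distribR
      sum.delta sum.delta' mult.commute cong: if_cong)

lemma Ad_mult:
  assumes "invertible a" "invertible b"
  shows "Ad (a ** b) X = Ad a (Ad b X)"
  unfolding Ad_def by (simp add: matrix_inv_mult[OF assms] matrix_mul_assoc)

lemma Ad_matrix_inv_Ad:
  assumes "invertible h"
  shows "Ad (matrix_inv h) (Ad h X) = X"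
proof -
  have "Ad (matrix_inv h) (Ad h X) = (matrix_inv h ** h) ** X ** (matrix_inv h ** h)"
    unfolding Ad_def by (simp add: matrix_mul_assoc matrix_inv_matrix_inv[OF assms])
  then show ?thesis by (simp add: matrix_inv_left[OF assms])
qed

lemma inj_Ad: "invertible h \<Longrightarrow> inj (Ad h)"
  by (metis Ad_matrix_inv_Ad injI)

lemma image_Ad_image_Ad_matrix_inv:
  "invertible h \<Longrightarrow> Ad (matrix_inv h) ` Ad h ` A = A"
  by (simp add: image_image Ad_matrix_inv_Ad)

lemma Ad_mat_1: "invertible h \<Longrightarrow> Ad h (mat 1) = mat 1"
  by (simp add: Ad_def matrix_inv_right)

lemma Ad_diff: "Ad h (X - Y) = Ad h X - Ad h (Y::('k::field, 'n::finite) mat)"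
  by (simp add: Ad_def matrix_mult_diff_left matrix_mult_diff_right)

lemma Ad_ksmult: "Ad h (ksmult c X) = ksmult c (Ad h X)"
  unfolding ksmult_eq_mat_mult Ad_def by (metis mat_mult_commute matrix_mul_assoc)

lemma Ad_ksum:
  fixes n :: nat
  shows "Ad h (\<Sum>i<n. ksmult (c i) (xs i)) = (\<Sum>i<n. ksmult (c i) (Ad h (xs i)))"
proof (induction n)
  case 0
  show ?case by (simp add: Ad_def)
next
  case (Suc n)
  then show ?case by (simp add: Ad_def matrix_add_ldistrib matrix_mult_add_right Ad_ksmult[unfolded Ad_def])
qed

lemma image_Ad_kspan: "Ad h ` kspan A = kspan (Ad h ` A)"
proof
  show "Ad h ` kspan A \<subseteq> kspan (Ad h ` A)"
  proof
    fix y assume "y \<in> Ad h ` kspan A"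
    then obtain n :: nat and c xs where "y = Ad h (\<Sum>i<n. ksmult (c i) (xs i))" "\<forall>i<n. xs i \<in> A"
      unfolding kspan_def by blast
    then show "y \<in> kspan (Ad h ` A)"
      unfolding kspan_def Ad_ksum by (intro CollectI exI[of _ n] exI[of _ c] exI[of _ "\<lambda>i. Ad h (xs i)"]) auto
  qed
next
  show "kspan (Ad h ` A) \<subseteq> Ad h ` kspan A"
  proof
    fix y assume "y \<in> kspan (Ad h ` A)"
    then obtain n :: nat and c ys where y: "y = (\<Sum>i<n. ksmult (c i) (ys i))"
      and ys: "\<forall>i<n. ys i \<in> Ad h ` A"
      unfolding kspan_def by blast
    define xs where "xs i = inv_into A (Ad h) (ys i)" for i
    have xs: "\<forall>i<n. xs i \<in> A \<and> ys i = Ad h (xs i)"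
      using ys by (simp add: xs_def inv_into_into f_inv_into_f)
    then have "y = Ad h (\<Sum>i<n. ksmult (c i) (xs i))"
      by (simp add: y Ad_ksum)
    moreover have "(\<Sum>i<n. ksmult (c i) (xs i)) \<in> kspan A"
      using xs unfolding kspan_def by blast
    ultimately show "y \<in> Ad h ` kspan A" by blast
  qed
qed

lemma image_Ad_lie_algebra:
  assumes "invertible h"
  shows "Ad h ` lie_algebra U = lie_algebra (Ad h ` U)"
proof -
  have "Ad h ` (\<lambda>u. u - mat 1) ` U = (\<lambda>u. u - mat 1) ` Ad h ` U"
    by (simp add: image_image Ad_diff Ad_mat_1[OF assms])
  then show ?thesis by (simp add: lie_algebra_def image_Ad_kspan Setcompr_eq_image)
qed

lemma quot_dim_le_image_Ad:
  fixes A L :: "('k::field, 'n::finite) mat set"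
  assumes "invertible h"
  shows "quot_dim A L \<le> quot_dim (Ad h ` A) (Ad h ` L)"
  unfolding quot_dim_def
proof (rule Sup_subset_mono, safe)
  fix n :: nat and xs :: "nat \<Rightarrow> ('k, 'n) mat"
  assume xs: "\<forall>i<n. xs i \<in> A"
    and indep: "\<forall>c. (\<Sum>i<n. ksmult (c i) (xs i)) \<in> L \<longrightarrow> (\<forall>i<n. c i = 0)"
  have "\<forall>c. (\<Sum>i<n. ksmult (c i) (Ad h (xs i))) \<in> Ad h ` L \<longrightarrow> (\<forall>i<n. c i = 0)"
    using indep inj_Ad[OF assms] by (auto simp: Ad_ksum[symmetric] inj_image_mem_iff)
  moreover have "\<forall>i<n. Ad h (xs i) \<in> Ad h ` A" using xs by blast
  ultimately show "\<exists>m. enat n = enat m \<and> (\<exists>ys. (\<forall>i<m. ys i \<in> Ad h ` A) \<and>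
      (\<forall>c. (\<Sum>i<m. ksmult (c i) (ys i)) \<in> Ad h ` L \<longrightarrow> (\<forall>i<m. c i = 0)))"
    by (intro exI[of _ n] conjI refl exI[of _ "\<lambda>i. Ad h (xs i)"])
qed

lemma quot_dim_image_Ad:
  assumes "invertible h"
  shows "quot_dim (Ad h ` A) (Ad h ` L) = quot_dim A L"
proof (rule antisym)
  have "quot_dim (Ad h ` A) (Ad h ` L)
      \<le> quot_dim (Ad (matrix_inv h) ` Ad h ` A) (Ad (matrix_inv h) ` Ad h ` L)"
    using invertible_matrix_inv[OF assms] by (rule quot_dim_le_image_Ad)
  then show "quot_dim (Ad h ` A) (Ad h ` L) \<le> quot_dim A L"
    by (simp only: image_Ad_image_Ad_matrix_inv[OF assms])
qed (rule quot_dim_le_image_Ad[OF assms])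

lemma intO_iff: "intO f \<longleftrightarrow> (\<forall>k<0. fls_nth f k = 0)"
  unfolding intO_def val_ge_def
  by (metis fls_eq0_below_subdegree fls_subdegree_ge0I order_less_le_trans zero_fls.rep_eq)

lemma intO_mult: "intO f \<Longrightarrow> intO g \<Longrightarrow> intO (f * g)"
  unfolding intO_def val_ge_def by (metis fls_mult_subdegree_ge_0 mult_zero_left mult_zero_right)

lemma intO_sum: "(\<And>x. x \<in> A \<Longrightarrow> intO (f x)) \<Longrightarrow> intO (sum f A)"
  by (induction A rule: infinite_finite_induct) (auto simp: intO_iff)

lemma gO_mult: "X \<in> gO \<Longrightarrow> Y \<in> gO \<Longrightarrow> X ** Y \<in> gO"
  unfolding gO_def matrix_matrix_mult_def by (auto intro!: intO_sum intO_mult)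

lemma mat_1_in_Kgrp: "(mat 1 :: ('k::field, 'n::finite) mat) \<in> Kgrp"
proof -
  have inv: "invertible (mat 1 :: ('k::field, 'n::finite) mat)"
    unfolding invertible_def by (metis matrix_mul_lid)
  then have "matrix_inv (mat 1 :: ('k, 'n) mat) = mat 1"
    by (rule matrix_inv_unique) simp
  moreover have "(mat 1 :: ('k, 'n) mat) \<in> gO"
    by (simp add: gO_def intO_def val_ge_def mat_def)
  ultimately show ?thesis using inv by (simp add: Kgrp_def)
qed

lemma image_Ad_Kgrp_gO:
  assumes "k \<in> Kgrp"
  shows "Ad k ` gO = gO"
proof -
  have image_Ad_subset: "Ad a ` gO \<subseteq> gO" if "a \<in> gO" "matrix_inv a \<in> gO" for a
    using that by (auto simp: Ad_def intro!: gO_mult)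
  have k: "invertible k" "k \<in> gO" "matrix_inv k \<in> gO"
    using assms by (auto simp: Kgrp_def)
  have "gO = Ad k ` Ad (matrix_inv k) ` gO"
    using image_Ad_image_Ad_matrix_inv[OF invertible_matrix_inv[OF k(1)]]
    by (simp add: matrix_inv_matrix_inv[OF k(1)])
  also have "\<dots> \<subseteq> Ad k ` gO"
    using image_Ad_subset[of "matrix_inv k"] k by (simp add: image_mono matrix_inv_matrix_inv)
  finally show ?thesis using image_Ad_subset k(2,3) by blast
qed

lemma image_Ad_gO_coset:
  assumes "invertible a" "coset g = coset a"
  shows "Ad g ` gO = Ad a ` gO"
proof -
  have "g \<in> coset g"
    unfolding coset_def using mat_1_in_Kgrp by (metis (mono_tags) matrix_mul_rid mem_Collect_eq)
  then obtain k where k: "k \<in> Kgrp" "g = a ** k"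
    using assms(2) unfolding coset_def by auto
  then have "Ad g ` gO = Ad a ` Ad k ` gO"
    by (simp add: image_image Ad_mult[OF assms(1)] Kgrp_def)
  then show ?thesis by (simp add: image_Ad_Kgrp_gO[OF k(1)])
qed

lemma image_Ad_lie_algebra_normalizing:
  assumes "normalizes H U" "h \<in> H" "invertible h"
  shows "Ad h ` lie_algebra U = lie_algebra U"
proof -
  have "Ad h ` U = {h ** u ** matrix_inv h | u. u \<in> U}" by (auto simp: Ad_def)
  then show ?thesis
    using assms by (simp add: normalizes_def image_Ad_lie_algebra)
qed

lemma invertible_if_Levi: "g \<in> Levi S \<Longrightarrow> invertible g"
  by (simp add: Levi_def GLF_def)

theorem mainTheorem16:
  fixes S :: "'n::finite set"
    and U H :: "('k::field, 'n) mat set"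
    and m g1 g2 :: "('k, 'n) mat"
  assumes "alg_closed_field TYPE('k)"
    and "S \<noteq> {}" and "S \<noteq> UNIV"
    and "subgroup_of U (Nrad S)" and "open_in_N S U"
    and "subgroup_of H (Levi S)" and "open_in_M S H"
    and "normalizes H U"
    and "m \<in> Levi S"
    and "g1 \<in> GLF" and "coset g1 \<in> Horbit H m"
    and "g2 \<in> GLF" and "coset g2 \<in> Horbit H m"
  shows "quot_dim (lie_algebra U) (Ad g1 ` gO) = quot_dim (lie_algebra U) (Ad g2 ` gO)"
proof -
  have m: "invertible m" using assms(9) by (rule invertible_if_Levi)
  have "quot_dim (lie_algebra U) (Ad g ` gO) = quot_dim (lie_algebra U) (Ad m ` gO)"
    if g: "coset g \<in> Horbit H m" for g
  proof -
    obtain h where h: "h \<in> H" "coset g = coset (h ** m)"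
      using g unfolding Horbit_def by blast
    have h_inv: "invertible h"
      using assms(6) h(1) by (auto simp: subgroup_of_def intro: invertible_if_Levi)
    have "Ad g ` gO = Ad h ` Ad m ` gO"
      using image_Ad_gO_coset[OF invertible_mult[OF h_inv m] h(2)]
      by (simp add: image_image Ad_mult[OF h_inv m])
    then have "quot_dim (lie_algebra U) (Ad g ` gO)
        = quot_dim (Ad h ` lie_algebra U) (Ad h ` Ad m ` gO)"
      by (simp only: image_Ad_lie_algebra_normalizing[OF assms(8) h(1) h_inv])
    also have "\<dots> = quot_dim (lie_algebra U) (Ad m ` gO)"
      using h_inv by (rule quot_dim_image_Ad)
    finally show ?thesis .
  qed
  then show ?thesis using assms(11,13) by simp
qed

end
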